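(* Assume $S\times M\neq\emptyset$, let $(x,\lambda):[t_0,+\infty[\ \to X\times Y$ be a solution of (AHT), and suppose $\varepsilon$ is decreasing and there exists $t_+\ge t_0$ such that $\varepsilon^2(t)+\dot\varepsilon(t)\ge0$ and $2\varepsilon(t)\dot\varepsilon(t)+\ddot\varepsilon(t)\le0$ for all $t\ge t_+$. Then \[ \limsup_{t\to+\infty}e^{-\rho(t)}\int_{t_+}^t e^{\rho(\tau)}\frac{1}{\varepsilon(\tau)}\|(\dot x(\tau),\dot\lambda(\tau))\|^2\,d\tau<+\infty. \]
   Context: $X,Y$ are real Hilbert spaces; $X\times Y$ carries the product inner product and norm $\|\cdot\|$. Standing assumptions: $f:X\to\mathbb{R}$ is convex and continuously differentiable with $\nabla f$ Lipschitz continuous on bounded subsets of $X$; $A:X\to Y$ is linear and continuous with adjoint $A^*$; $b\in Y$; $\varepsilon:[t_0,+\infty[\ \to\ ]0,+\infty[$ ($t_0\ge0$) is twice continuously differentiable with $\lim_{t\to+\infty}\varepsilon(t)=0$. $L(x,\lambda)=f(x)+\langle\lambda,Ax-b\rangle_Y$. $S$ is the set of optimal solutions of $\min\{f(x):Ax=b\}$, $M$ the set of Lagrange multipliers; $S\times M$ is the set of saddle points of $L$. $\rho(t)=\int_{t_0}^t\varepsilon(\tau)\,d\tau$. (AHT) is the system $\dot x+\nabla f(x)+A^*\lambda+\varepsilon(t)x=0$, $\dot\lambda+b-Ax+\varepsilon(t)\lambda=0$; a solution is a continuously differentiable $(x,\lambda):[t_0,+\infty[\ \to X\times Y$ satisfying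 it on $[t_0,+\infty[$ (existence and uniqueness for every initial datum is assumed). *)

theory Defs
  imports "HOL-Analysis.Analysis"
begin

definition opt_set :: "('a::real_inner \<Rightarrow> real) \<Rightarrow> ('a \<Rightarrow> 'b::real_inner) \<Rightarrow> 'b \<Rightarrow> 'a set" where
  "opt_set f A b = {x. A x = b \<and> (\<forall>y. A y = b \<longrightarrow> f x \<le> f y)}"

definition mult_set :: "('a::real_inner \<Rightarrow> real) \<Rightarrow> ('a \<Rightarrow> 'a) \<Rightarrow> ('a \<Rightarrow> 'b::real_inner) \<Rightarrow> ('b \<Rightarrow> 'a) \<Rightarrow> 'b \<Rightarrow> 'b set" where
  "mult_set f gf A Astar b = {lam. \<exists>x \<in> opt_set f A b. gf x + Astar lam = 0}"

definition rho :: "(real \<Rightarrow> real) \<Rightarrow> real \<Rightarrow> real \<Rightarrow> real" where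
  "rho eps t0 t = integral {t0..t} eps"

end

theory Submission
  imports Defs
begin

(* Writing z = (x, lambda), (AHT) is the flow z' = - F z - eps z of the monotone operator
   F = saddle_operator, which has a zero w.  Then exp rho (|z - w|^2 - |w|^2) is nonincreasing,
   so z is bounded.  Next, E = exp (2 rho) (|z'|^2 / 2 + eps' |z|^2 / 2) is nonincreasing:
   formally, monotonicity of F removes the term coming from F, and what is left is controlled
   by 2 eps eps' + eps'' <= 0; rigorously, the same computation is done on forward differences
   of step h, and h -> 0+.  Since eps exp rho is nondecreasing and - eps' <= eps^2 on
   [tp, oo), this gives |z'|^2 <= K eps^2, and the weighted integral is then at most
   K exp rho t, whence the bound. *)

lemma increment_le_of_derivative_le:
  fixes G :: "real \<Rightarrow> real"
  assumes "a \<le> b"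
    and "\<And>s. a \<le> s \<Longrightarrow> s \<le> b \<Longrightarrow> (G has_real_derivative G' s) (at s within {a..b})"
    and "\<And>s. a \<le> s \<Longrightarrow> s \<le> b \<Longrightarrow> G' s \<le> K"
  shows "G b - G a \<le> K * (b - a)"
proof -
  obtain s where "s \<in> {a..b}" "G b - G a = G' s * (b - a)"
    using mvt_very_simple[of a b G "\<lambda>s h. G' s * h"] assms(1,2)
    unfolding has_field_derivative_def by blast
  then show ?thesis
    using assms(1,3) by (auto intro: mult_right_mono)
qed

lemma increment_ge_of_derivative_ge:
  fixes G :: "real \<Rightarrow> real"
  assumes "a \<le> b"
    and "\<And>s. a \<le> s \<Longrightarrow> s \<le> b \<Longrightarrow> (G has_real_derivative G' s) (at s within {a..b})"
    and "\<And>s. a \<le> s \<Longrightarrow> s \<le> b \<Longrightarrow> K \<le> G' s"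
  shows "K * (b - a) \<le> G b - G a"
proof -
  have "(\<lambda>s. - G s) b - (\<lambda>s. - G s) a \<le> (- K) * (b - a)"
    by (rule increment_le_of_derivative_le[OF assms(1)]) (use assms(2,3) in \<open>auto intro: derivative_intros\<close>)
  then show ?thesis
    by simp
qed

lemma antimono_of_derivative_nonpos:
  fixes G :: "real \<Rightarrow> real"
  assumes "a \<le> b"
    and "\<And>s. a \<le> s \<Longrightarrow> s \<le> b \<Longrightarrow> (G has_real_derivative G' s) (at s within {a..b})"
    and "\<And>s. a \<le> s \<Longrightarrow> s \<le> b \<Longrightarrow> G' s \<le> 0"
  shows "G b \<le> G a"
  using increment_le_of_derivative_le[of a b G G' 0] assms by simp

lemma integral_has_real_derivative_atLeast:
  assumes "continuous_on {a..} g" and "a \<le> t"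
  shows "((\<lambda>x. integral {a..x} g) has_real_derivative g t) (at t within {a..})"
proof -
  have "at t within {a..} = at t within {a..t+1}"
    by (rule at_within_nhd[where S = "{..<t+1}"]) auto
  moreover have "continuous_on {a..t+1} g"
    using assms(1) by (rule continuous_on_subset) auto
  ultimately show ?thesis
    using integral_has_real_derivative[of a "t+1" g t] assms(2) by simp
qed

lemma has_real_derivative_half_sq_norm:
  fixes g :: "real \<Rightarrow> 'a::real_inner"
  assumes "(g has_vector_derivative g') (at s within S)"
  shows "((\<lambda>t. norm (g t)^2 / 2) has_real_derivative inner g' (g s)) (at s within S)"
proof -
  have "(g has_derivative (\<lambda>t. t *\<^sub>R g')) (at s within S)"
    using assms by (simp add: has_vector_derivative_def)
  then have "((\<lambda>t. inner (g t) (g t) / 2) has_derivative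
      (\<lambda>t. (inner (g s) (t *\<^sub>R g') + inner (t *\<^sub>R g') (g s)) / 2)) (at s within S)"
    by (intro derivative_eq_intros) auto
  moreover have "(\<lambda>t. (inner (g s) (t *\<^sub>R g') + inner (t *\<^sub>R g') (g s)) / 2) = (*) (inner g' (g s))"
    by (auto simp: fun_eq_iff inner_commute)
  ultimately show ?thesis
    by (simp add: has_field_derivative_def power2_norm_eq_inner)
qed

lemma has_vector_derivative_shift:
  fixes g :: "real \<Rightarrow> 'a::real_normed_vector"
  assumes "0 \<le> h" and "(g has_vector_derivative g') (at (s + h) within {a..})"
  shows "((\<lambda>t. g (t + h)) has_vector_derivative g') (at s within {a..})"
proof -
  have "((\<lambda>t. t + h) has_vector_derivative 1) (at s within {a..})"
    by (auto intro!: derivative_eq_intros)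
  moreover have "(g has_vector_derivative g') (at (s + h) within (\<lambda>t. t + h) ` {a..})"
    using assms by (auto intro: has_vector_derivative_within_subset)
  ultimately show ?thesis
    using vector_diff_chain_within[of "\<lambda>t. t + h" 1 s "{a..}" g g'] by (simp add: o_def)
qed

lemma has_real_derivative_shift:
  fixes g :: "real \<Rightarrow> real"
  assumes "0 \<le> h" and "(g has_real_derivative g') (at (s + h) within {a..})"
  shows "((\<lambda>t. g (t + h)) has_real_derivative g') (at s within {a..})"
  using has_vector_derivative_shift[of h g g' s a] assms
  by (simp add: has_real_derivative_iff_has_vector_derivative)

definition fwd_diff :: "real \<Rightarrow> (real \<Rightarrow> 'a::ab_group_add) \<Rightarrow> real \<Rightarrow> 'a" where
  "fwd_diff h g s = g (s + h) - g s"

lemma has_vector_derivative_fwd_diff: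
  fixes g :: "real \<Rightarrow> 'a::real_normed_vector"
  assumes "0 \<le> h" and "a \<le> s"
    and "\<And>t. a \<le> t \<Longrightarrow> (g has_vector_derivative g' t) (at t within {a..})"
  shows "(fwd_diff h g has_vector_derivative fwd_diff h g' s) (at s within {a..})"
  unfolding fwd_diff_def[abs_def]
  using assms by (intro has_vector_derivative_diff has_vector_derivative_shift) auto

lemma has_real_derivative_fwd_diff:
  fixes g :: "real \<Rightarrow> real"
  assumes "0 \<le> h" and "a \<le> s"
    and "\<And>t. a \<le> t \<Longrightarrow> (g has_real_derivative g' t) (at t within {a..})"
  shows "(fwd_diff h g has_real_derivative fwd_diff h g' s) (at s within {a..})"
  using has_vector_derivative_fwd_diff[of h a s g g'] assms
  by (simp add: has_real_derivative_iff_has_vector_derivative)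

lemma fwd_diff_quotient_tendsto:
  fixes g :: "real \<Rightarrow> 'a::real_normed_vector"
  assumes "(g has_vector_derivative g') (at s within {s..})"
  shows "((\<lambda>h. fwd_diff h g s /\<^sub>R h) \<longlongrightarrow> g') (at_right 0)"
proof -
  have "((\<lambda>t. (1 / norm (t - s)) *\<^sub>R (g t - (g s + (t - s) *\<^sub>R g'))) \<longlongrightarrow> 0) (at_right s)"
    using assms unfolding has_vector_derivative_def has_derivative_within at_within_Ici_at_right
    by blast
  then have "((\<lambda>h. (1 / norm h) *\<^sub>R (g (h + s) - (g s + h *\<^sub>R g')) + g') \<longlongrightarrow> 0 + g') (at_right 0)"
    unfolding filterlim_at_right_to_0[of _ _ s] by (intro tendsto_intros) simp
  moreover have "\<forall>\<^sub>F h in at_right 0.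
      (1 / norm h) *\<^sub>R (g (h + s) - (g s + h *\<^sub>R g')) + g' = fwd_diff h g s /\<^sub>R h"
    by (rule eventually_at_rightI[of 0 1]) (auto simp: fwd_diff_def algebra_simps divide_simps)
  ultimately show ?thesis
    by (auto intro: Lim_transform_eventually)
qed

lemma fwd_diff_quotient_tendsto_real:
  fixes g :: "real \<Rightarrow> real"
  assumes "(g has_real_derivative g') (at s within {s..})"
  shows "((\<lambda>h. fwd_diff h g s / h) \<longlongrightarrow> g') (at_right 0)"
  using fwd_diff_quotient_tendsto[of g g' s] assms
  by (simp add: has_real_derivative_iff_has_vector_derivative divide_inverse_commute)

lemma convex_on_gradient_inequality:
  fixes f :: "'a::real_inner \<Rightarrow> real"
  assumes cvx: "convex_on UNIV f"
    and grad: "\<And>u. (f has_derivative (\<lambda>h. inner (gf u) h)) (at u)"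
  shows "inner (gf x) (y - x) \<le> f y - f x"
proof -
  define g where "g s = f (x + s *\<^sub>R (y - x))" for s :: real
  have "convex_on UNIV g"
  proof (rule convex_onI)
    fix t u v :: real
    assume "0 < t" "t < 1"
    have "x + ((1 - t) *\<^sub>R u + t *\<^sub>R v) *\<^sub>R (y - x)
        = (1 - t) *\<^sub>R (x + u *\<^sub>R (y - x)) + t *\<^sub>R (x + v *\<^sub>R (y - x))"
      by (simp add: algebra_simps)
    then show "g ((1 - t) *\<^sub>R u + t *\<^sub>R v) \<le> (1 - t) * g u + t * g v"
      unfolding g_def using convex_onD[OF cvx, of t] \<open>0 < t\<close> \<open>t < 1\<close> by simp
  qed simp
  moreover have "(g has_real_derivative inner (gf x) (y - x)) (at 0)"
  proof -
    have "(g has_derivative (\<lambda>s. inner (gf (x + 0 *\<^sub>R (y - x))) (s *\<^sub>R (y - x)))) (at 0)"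
      unfolding g_def
      by (rule diff_chain_at[of "\<lambda>s. x + s *\<^sub>R (y - x)" "\<lambda>s. s *\<^sub>R (y - x)", unfolded o_def, OF _ grad])
         (auto intro!: derivative_eq_intros)
    then show ?thesis
      unfolding has_field_derivative_def by (rule has_derivative_eq_rhs) (simp add: fun_eq_iff)
  qed
  ultimately have "inner (gf x) (y - x) * (1 - 0) \<le> g 1 - g 0"
    by (intro convex_on_imp_above_tangent) auto
  then show ?thesis
    by (simp add: g_def)
qed

lemma convex_on_gradient_monotone:
  fixes f :: "'a::real_inner \<Rightarrow> real"
  assumes "convex_on UNIV f"
    and "\<And>u. (f has_derivative (\<lambda>h. inner (gf u) h)) (at u)"
  shows "0 \<le> inner (gf u - gf v) (u - v)"
  using convex_on_gradient_inequality[OF assms, of u v] convex_on_gradient_inequality[OF assms, of v u]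
  by (simp add: inner_diff_left inner_diff_right inner_commute)

(* (grad_x L, - grad_lambda L) for the Lagrangian L x lambda = f x + <lambda, A x - b> *)
definition saddle_operator ::
    "('a::real_inner \<Rightarrow> 'a) \<Rightarrow> ('a \<Rightarrow> 'b::real_inner) \<Rightarrow> ('b \<Rightarrow> 'a) \<Rightarrow> 'b \<Rightarrow> 'a \<times> 'b \<Rightarrow> 'a \<times> 'b" where
  "saddle_operator gf A Astar b = (\<lambda>(u, l). (gf u + Astar l, b - A u))"

lemma saddle_operator_monotone:
  assumes gf_mono: "\<And>u v. 0 \<le> inner (gf u - gf v) (u - v)"
    and adj: "\<And>u l. inner (A u) l = inner u (Astar l)"
  shows "0 \<le> inner (saddle_operator gf A Astar b w - saddle_operator gf A Astar b w') (w - w')"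
proof -
  obtain u l u' l' where w: "w = (u, l)" "w' = (u', l')"
    by (cases w, cases w')
  have adj': "inner (Astar k) v = inner (A v) k" for k v
    by (metis adj inner_commute)
  have "inner (Astar l - Astar l') (u - u') = inner (A u - A u') (l - l')"
    by (simp add: inner_diff_left inner_diff_right adj')
  then have "inner (saddle_operator gf A Astar b w - saddle_operator gf A Astar b w') (w - w')
      = inner (gf u - gf u') (u - u')"
    unfolding w saddle_operator_def by (simp add: inner_diff_left inner_add_left algebra_simps)
  then show ?thesis
    using gf_mono by simp
qed

lemma saddle_operator_zero:
  assumes "opt_set f A b \<times> mult_set f gf A Astar b \<noteq> {}"
  shows "\<exists>w. saddle_operator gf A Astar b w = 0"
proof -
  obtain l where "l \<in> mult_set f gf A Astar b"
    using assms by auto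
  then obtain u where "u \<in> opt_set f A b" "gf u + Astar l = 0"
    unfolding mult_set_def by auto
  then have "saddle_operator gf A Astar b (u, l) = 0"
    by (simp add: saddle_operator_def opt_set_def zero_prod_def)
  then show ?thesis ..
qed

lemma saddle_operator_flow_eq:
  assumes "x' + gf x + Astar l + e *\<^sub>R x = 0" and "l' + b - A x + e *\<^sub>R l = 0"
  shows "(x', l') = - saddle_operator gf A Astar b (x, l) - e *\<^sub>R (x, l)"
proof -
  have "x' = - (gf x + Astar l + e *\<^sub>R x)"
    using assms(1) by (simp only: eq_neg_iff_add_eq_0 add.assoc)
  moreover have "l' = - (b - A x + e *\<^sub>R l)"
    using assms(2) by (simp add: eq_neg_iff_add_eq_0 algebra_simps)
  ultimately show ?thesis
    by (simp add: saddle_operator_def algebra_simps)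
qed

locale tikhonov_monotone_flow =
  fixes F :: "'z::real_inner \<Rightarrow> 'z" and eps :: "real \<Rightarrow> real" and t0 :: real
    and z z' :: "real \<Rightarrow> 'z"
  assumes F_monotone: "\<And>u v. 0 \<le> inner (F u - F v) (u - v)"
    and F_zero: "\<exists>w. F w = 0"
    and eps_pos: "\<And>t. t0 \<le> t \<Longrightarrow> 0 < eps t"
    and eps_cont: "continuous_on {t0..} eps"
    and z_deriv: "\<And>t. t0 \<le> t \<Longrightarrow> (z has_vector_derivative z' t) (at t within {t0..})"
    and flow_eq: "\<And>t. t0 \<le> t \<Longrightarrow> z' t = - F (z t) - eps t *\<^sub>R z t"
begin

abbreviation \<rho> :: "real \<Rightarrow> real" where
  "\<rho> \<equiv> rho eps t0"

lemma rho_deriv: "t0 \<le> t \<Longrightarrow> (\<rho> has_real_derivative eps t) (at t within {t0..})"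
  unfolding rho_def[abs_def] by (rule integral_has_real_derivative_atLeast[OF eps_cont])

lemma rho_mono:
  assumes "t0 \<le> s" "s \<le> t"
  shows "\<rho> s \<le> \<rho> t"
proof -
  have "0 * (t - s) \<le> \<rho> t - \<rho> s"
  proof (rule increment_ge_of_derivative_ge[OF assms(2)])
    fix u assume "s \<le> u" "u \<le> t"
    then show "(\<rho> has_real_derivative eps u) (at u within {s..t})"
      using assms by (auto intro: DERIV_subset[OF rho_deriv])
    show "0 \<le> eps u"
      using eps_pos[of u] assms \<open>s \<le> u\<close> by simp
  qed
  then show ?thesis
    by simp
qed

lemma rho_nonneg: "t0 \<le> t \<Longrightarrow> 0 \<le> \<rho> t"
  using rho_mono[of t0 t] by (simp add: rho_def)

lemma z_cont: "continuous_on {t0..} z"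
  by (auto simp: continuous_on_eq_continuous_within intro: has_vector_derivative_continuous[OF z_deriv])

lemma weighted_distance_to_zero_le:
  assumes w: "F w = 0" and t: "t0 \<le> t"
  shows "exp (\<rho> t) * (norm (z t - w)^2 / 2 - norm w^2 / 2) \<le> norm (z t0 - w)^2 / 2 - norm w^2 / 2"
proof -
  define V where "V t = exp (\<rho> t) * (norm (z t - w)^2 / 2 - norm w^2 / 2)" for t
  have "V t \<le> V t0"
  proof (rule antimono_of_derivative_nonpos[OF t])
    fix s assume s: "t0 \<le> s" "s \<le> t"
    have "(V has_real_derivative exp (\<rho> s) * eps s * (norm (z s - w)^2 / 2 - norm w^2 / 2)
        + exp (\<rho> s) * inner (z' s) (z s - w)) (at s within {t0..})"
      unfolding V_def
      by (rule derivative_eq_intros rho_deriv has_real_derivative_half_sq_norm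
          has_vector_derivative_diff z_deriv | use s in simp)+
    then show "(V has_real_derivative exp (\<rho> s) * (eps s * (norm (z s - w)^2 / 2 - norm w^2 / 2)
        + inner (z' s) (z s - w))) (at s within {t0..t})"
      by (auto intro: DERIV_subset simp: algebra_simps)
    have "norm (z s - w)^2 / 2 - norm w^2 / 2 = inner (z s) (z s - w) - norm (z s)^2 / 2"
      by (simp add: power2_norm_eq_inner inner_diff_left inner_diff_right inner_commute
          algebra_simps add_divide_distrib diff_divide_distrib)
    then have "eps s * (norm (z s - w)^2 / 2 - norm w^2 / 2) \<le> eps s * inner (z s) (z s - w)"
      using eps_pos[OF s(1)] by (intro mult_left_mono) auto
    moreover have "inner (z' s) (z s - w)
        = - inner (F (z s) - F w) (z s - w) - eps s * inner (z s) (z s - w)"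
      using flow_eq[OF s(1)] w by (simp add: inner_diff_left inner_add_left)
    ultimately have "eps s * (norm (z s - w)^2 / 2 - norm w^2 / 2) + inner (z' s) (z s - w) \<le> 0"
      using F_monotone[of "z s" w] by linarith
    then show "exp (\<rho> s) * (eps s * (norm (z s - w)^2 / 2 - norm w^2 / 2)
        + inner (z' s) (z s - w)) \<le> 0"
      by (simp add: mult_nonneg_nonpos)
  qed
  then show ?thesis
    by (simp add: V_def rho_def)
qed

lemma trajectory_bounded:
  obtains B where "\<And>t. t0 \<le> t \<Longrightarrow> norm (z t) \<le> B"
proof -
  obtain w where w: "F w = 0"
    using F_zero ..
  define R where "R = sqrt (2 * max (norm w^2 / 2) (norm (z t0 - w)^2 / 2))"
  have "norm (z t) \<le> norm w + R" if t: "t0 \<le> t" for t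
  proof -
    have "norm (z t - w)^2 / 2 - norm w^2 / 2 \<le> max 0 (norm (z t0 - w)^2 / 2 - norm w^2 / 2)"
    proof (cases "norm (z t - w)^2 / 2 - norm w^2 / 2 \<le> 0")
      case False
      have "1 \<le> exp (\<rho> t)"
        using rho_nonneg[OF t] by simp
      then have "norm (z t - w)^2 / 2 - norm w^2 / 2 \<le> exp (\<rho> t) * (norm (z t - w)^2 / 2 - norm w^2 / 2)"
        using False mult_right_mono[of 1 "exp (\<rho> t)"] by fastforce
      also have "\<dots> \<le> norm (z t0 - w)^2 / 2 - norm w^2 / 2"
        using w t by (rule weighted_distance_to_zero_le)
      finally show ?thesis
        by (rule max.coboundedI2)
    qed (rule max.coboundedI1)
    then have "norm (z t - w) \<le> R"
      unfolding R_def by (simp add: real_le_rsqrt)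
    then show ?thesis
      using norm_triangle_ineq[of w "z t - w"] by simp
  qed
  then show ?thesis ..
qed

end

locale tikhonov_monotone_flow_C2 = tikhonov_monotone_flow +
  fixes eps' eps'' :: "real \<Rightarrow> real" and tp :: real
  assumes eps_deriv: "\<And>t. t0 \<le> t \<Longrightarrow> (eps has_real_derivative eps' t) (at t within {t0..})"
    and eps'_deriv: "\<And>t. t0 \<le> t \<Longrightarrow> (eps' has_real_derivative eps'' t) (at t within {t0..})"
    and z'_cont: "continuous_on {t0..} z'"
    and eps_antimono: "\<And>s t. t0 \<le> s \<Longrightarrow> s \<le> t \<Longrightarrow> eps t \<le> eps s"
    and tp_ge: "t0 \<le> tp"
    and eps_sq_plus_deriv_nonneg: "\<And>t. tp \<le> t \<Longrightarrow> 0 \<le> (eps t)\<^sup>2 + eps' t"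
    and eps_sq_plus_deriv_deriv_nonpos: "\<And>t. tp \<le> t \<Longrightarrow> 2 * eps t * eps' t + eps'' t \<le> 0"
begin

definition half_sq_norm :: "real \<Rightarrow> real" where
  "half_sq_norm t = norm (z t)^2 / 2"

definition half_sq_norm_integral :: "real \<Rightarrow> real" where
  "half_sq_norm_integral t = integral {t0..t} half_sq_norm"

definition velocity_energy :: "real \<Rightarrow> real" where
  "velocity_energy t = exp (2 * \<rho> t) * (norm (z' t)^2 / 2 + eps' t * half_sq_norm t)"

(* z is only C^1, so velocity_energy cannot be differentiated.  Its forward-difference analogue
   can, and discrete_energy h t / h^2 tends to the bracket of velocity_energy t as h -> 0+.
   Differencing the primitive of half_sq_norm rather than half_sq_norm itself makes the
   derivative of the product term cancel the cross term coming from z' (t + h) - z' t. *)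
definition discrete_energy :: "real \<Rightarrow> real \<Rightarrow> real" where
  "discrete_energy h t = norm (fwd_diff h z t)^2 / 2 + fwd_diff h eps t * fwd_diff h half_sq_norm_integral t"

definition discrete_energy_deriv :: "real \<Rightarrow> real \<Rightarrow> real" where
  "discrete_energy_deriv h t = inner (fwd_diff h z' t) (fwd_diff h z t)
     + fwd_diff h eps' t * fwd_diff h half_sq_norm_integral t + fwd_diff h eps t * fwd_diff h half_sq_norm t"

lemma half_sq_norm_integral_deriv:
  "t0 \<le> t \<Longrightarrow> (half_sq_norm_integral has_real_derivative half_sq_norm t) (at t within {t0..})"
  unfolding half_sq_norm_integral_def[abs_def] half_sq_norm_def[abs_def]
  by (intro integral_has_real_derivative_atLeast continuous_intros z_cont) auto

lemma eps_exp_rho_mono: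
  assumes "tp \<le> s" "s \<le> t"
  shows "eps s * exp (\<rho> s) \<le> eps t * exp (\<rho> t)"
proof -
  have "0 * (t - s) \<le> eps t * exp (\<rho> t) - eps s * exp (\<rho> s)"
  proof (rule increment_ge_of_derivative_ge[OF assms(2)])
    fix u assume u: "s \<le> u" "u \<le> t"
    have u0: "t0 \<le> u" and sub: "{s..t} \<subseteq> {t0..}"
      using assms u tp_ge by auto
    show "((\<lambda>u. eps u * exp (\<rho> u)) has_real_derivative
        exp (\<rho> u) * ((eps u)\<^sup>2 + eps' u)) (at u within {s..t})"
      by (rule derivative_eq_intros DERIV_subset[OF eps_deriv[OF u0] sub]
          DERIV_subset[OF rho_deriv[OF u0] sub] refl)+ (simp add: algebra_simps power2_eq_square)
    show "0 \<le> exp (\<rho> u) * ((eps u)\<^sup>2 + eps' u)"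
      using eps_sq_plus_deriv_nonneg[of u] assms u by simp
  qed
  then show ?thesis
    by simp
qed

lemma eps_sq_plus_deriv_antimono:
  assumes "tp \<le> s" "s \<le> t"
  shows "(eps t)\<^sup>2 + eps' t \<le> (eps s)\<^sup>2 + eps' s"
proof (rule antimono_of_derivative_nonpos[OF assms(2)])
  fix u assume u: "s \<le> u" "u \<le> t"
  have u0: "t0 \<le> u" and sub: "{s..t} \<subseteq> {t0..}"
    using assms u tp_ge by auto
  show "((\<lambda>u. (eps u)\<^sup>2 + eps' u) has_real_derivative 2 * eps u * eps' u + eps'' u) (at u within {s..t})"
    by (rule derivative_eq_intros DERIV_subset[OF eps_deriv[OF u0] sub]
        DERIV_subset[OF eps'_deriv[OF u0] sub] refl)+ simp
  show "2 * eps u * eps' u + eps'' u \<le> 0"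
    using eps_sq_plus_deriv_deriv_nonpos[of u] assms u by simp
qed

lemma fwd_diff_eps_bounds:
  assumes "tp \<le> s" "0 \<le> h"
  shows "- (eps tp)\<^sup>2 * h \<le> fwd_diff h eps s" and "fwd_diff h eps s \<le> 0"
proof -
  have "(- (eps tp)\<^sup>2) * (s + h - s) \<le> eps (s + h) - eps s"
  proof (rule increment_ge_of_derivative_ge)
    fix u assume u: "s \<le> u" "u \<le> s + h"
    have "t0 \<le> u" and sub: "{s..s + h} \<subseteq> {t0..}"
      using assms u tp_ge by auto
    then show "(eps has_real_derivative eps' u) (at u within {s..s + h})"
      by (rule DERIV_subset[OF eps_deriv])
    have "(eps u)\<^sup>2 \<le> (eps tp)\<^sup>2"
      using eps_antimono[OF tp_ge, of u] eps_pos[OF \<open>t0 \<le> u\<close>] assms u by (intro power_mono) auto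
    then show "- (eps tp)\<^sup>2 \<le> eps' u"
      using eps_sq_plus_deriv_nonneg[of u] assms u by simp
  qed (use assms in simp)
  then show "- (eps tp)\<^sup>2 * h \<le> fwd_diff h eps s"
    by (simp add: fwd_diff_def)
  show "fwd_diff h eps s \<le> 0"
    using eps_antimono[of s "s + h"] assms tp_ge by (simp add: fwd_diff_def)
qed

lemma fwd_diff_half_sq_norm_integral_nonneg:
  assumes "t0 \<le> s" "0 \<le> h"
  shows "0 \<le> fwd_diff h half_sq_norm_integral s"
proof -
  have "0 * (s + h - s) \<le> half_sq_norm_integral (s + h) - half_sq_norm_integral s"
    by (rule increment_ge_of_derivative_ge)
       (use assms in \<open>auto intro: DERIV_subset[OF half_sq_norm_integral_deriv] simp: half_sq_norm_def\<close>)
  then show ?thesis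
    by (simp add: fwd_diff_def)
qed

lemma fwd_diff_half_sq_norm_integral_le:
  assumes bound: "\<And>t. t0 \<le> t \<Longrightarrow> norm (z t) \<le> B" and "t0 \<le> s" "0 \<le> h"
  shows "fwd_diff h half_sq_norm_integral s \<le> B\<^sup>2 / 2 * h"
proof -
  have "half_sq_norm_integral (s + h) - half_sq_norm_integral s \<le> B\<^sup>2 / 2 * (s + h - s)"
  proof (rule increment_le_of_derivative_le)
    fix u assume u: "s \<le> u" "u \<le> s + h"
    then show "(half_sq_norm_integral has_real_derivative half_sq_norm u) (at u within {s..s + h})"
      using assms by (auto intro: DERIV_subset[OF half_sq_norm_integral_deriv])
    show "half_sq_norm u \<le> B\<^sup>2 / 2"
      using bound[of u] assms u by (auto simp: half_sq_norm_def intro: power_mono)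
  qed (use assms in simp)
  then show ?thesis
    by (simp add: fwd_diff_def)
qed

lemma discrete_energy_has_deriv:
  assumes "t0 \<le> s" "0 \<le> h"
  shows "(discrete_energy h has_real_derivative discrete_energy_deriv h s) (at s within {t0..})"
proof -
  have "((\<lambda>t. norm (fwd_diff h z t)^2 / 2) has_real_derivative inner (fwd_diff h z' s) (fwd_diff h z s))
      (at s within {t0..})"
    using assms by (intro has_real_derivative_half_sq_norm has_vector_derivative_fwd_diff z_deriv)
  moreover have "(fwd_diff h eps has_real_derivative fwd_diff h eps' s) (at s within {t0..})"
    using assms by (intro has_real_derivative_fwd_diff eps_deriv)
  moreover have "(fwd_diff h half_sq_norm_integral has_real_derivative fwd_diff h half_sq_norm s)
      (at s within {t0..})"
    using assms by (intro has_real_derivative_fwd_diff half_sq_norm_integral_deriv)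
  ultimately have "(discrete_energy h has_real_derivative inner (fwd_diff h z' s) (fwd_diff h z s)
      + (fwd_diff h eps s * fwd_diff h half_sq_norm s + fwd_diff h eps' s * fwd_diff h half_sq_norm_integral s))
      (at s within {t0..})"
    unfolding discrete_energy_def[abs_def] by (intro DERIV_add DERIV_mult')
  then show ?thesis
    by (simp add: discrete_energy_deriv_def algebra_simps)
qed

lemma fwd_diff_velocity:
  assumes "t0 \<le> s" "0 \<le> h"
  shows "fwd_diff h z' s
    = - fwd_diff h (\<lambda>t. F (z t)) s - eps (s + h) *\<^sub>R fwd_diff h z s - fwd_diff h eps s *\<^sub>R z s"
proof -
  have "fwd_diff h z' s = (- F (z (s + h)) - eps (s + h) *\<^sub>R z (s + h)) - (- F (z s) - eps s *\<^sub>R z s)"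
    using assms by (simp only: fwd_diff_def flow_eq)
  then show ?thesis
    by (simp add: fwd_diff_def algebra_simps)
qed

lemma fwd_diff_half_sq_norm:
  "fwd_diff h half_sq_norm s = inner (z s) (fwd_diff h z s) + norm (fwd_diff h z s)^2 / 2"
proof -
  have "norm (z s + fwd_diff h z s)^2 / 2 - norm (z s)^2 / 2
      = inner (z s) (fwd_diff h z s) + norm (fwd_diff h z s)^2 / 2"
    by (simp add: power2_norm_eq_inner inner_add_left inner_add_right inner_commute add_divide_distrib)
  moreover have "z s + fwd_diff h z s = z (s + h)"
    by (simp add: fwd_diff_def)
  ultimately show ?thesis
    by (simp add: fwd_diff_def[of h half_sq_norm] half_sq_norm_def)
qed

lemma discrete_energy_dissipation:
  assumes "tp \<le> s" "0 \<le> h"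
  shows "2 * eps (s + h) * discrete_energy h s + discrete_energy_deriv h s
    \<le> (fwd_diff h eps s)\<^sup>2 * fwd_diff h half_sq_norm_integral s"
proof -
  have s: "t0 \<le> s"
    using assms tp_ge by simp
  define D where "D = fwd_diff h z s"
  define \<delta> where "\<delta> = fwd_diff h eps s"
  define Q where "Q = fwd_diff h half_sq_norm_integral s"
  define \<Delta>F where "\<Delta>F = fwd_diff h (\<lambda>t. F (z t)) s"
  have "2 * eps (s + h) * discrete_energy h s + discrete_energy_deriv h s
      = 2 * eps (s + h) * \<delta> * Q + fwd_diff h eps' s * Q + \<delta> * norm D^2 / 2 - inner \<Delta>F D"
    unfolding discrete_energy_def discrete_energy_deriv_def fwd_diff_velocity[OF s assms(2)]
      fwd_diff_half_sq_norm
    by (simp add: D_def \<delta>_def Q_def \<Delta>F_def inner_diff_left power2_norm_eq_inner algebra_simps)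
  also have "\<dots> \<le> 2 * eps (s + h) * \<delta> * Q - \<delta> * (eps (s + h) + eps s) * Q"
  proof -
    have "fwd_diff h eps' s \<le> - \<delta> * (eps (s + h) + eps s)"
      using eps_sq_plus_deriv_antimono[OF assms(1), of "s + h"] assms(2)
      by (simp add: fwd_diff_def \<delta>_def power2_eq_square algebra_simps)
    moreover have "0 \<le> Q"
      unfolding Q_def using s assms(2) by (rule fwd_diff_half_sq_norm_integral_nonneg)
    ultimately have "fwd_diff h eps' s * Q \<le> - \<delta> * (eps (s + h) + eps s) * Q"
      by (rule mult_right_mono)
    moreover have "\<delta> * norm D^2 / 2 \<le> 0"
      using fwd_diff_eps_bounds(2)[OF assms] by (simp add: \<delta>_def mult_nonpos_nonneg)
    moreover have "0 \<le> inner \<Delta>F D"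
      using F_monotone by (simp add: \<Delta>F_def D_def fwd_diff_def)
    ultimately show ?thesis
      by linarith
  qed
  also have "\<dots> = \<delta>\<^sup>2 * Q"
    by (simp add: \<delta>_def fwd_diff_def power2_eq_square algebra_simps)
  finally show ?thesis
    by (simp add: \<delta>_def Q_def)
qed

lemma weighted_discrete_energy_increment:
  assumes bound: "\<And>t. t0 \<le> t \<Longrightarrow> norm (z t) \<le> B"
    and T: "tp \<le> T" and h: "0 < h" "h \<le> 1"
  shows "exp (2 * \<rho> (T + h)) * discrete_energy h T - exp (2 * \<rho> (tp + h)) * discrete_energy h tp
    \<le> h^3 * (exp (2 * \<rho> (T + 1)) * (eps tp)^4 * (B\<^sup>2 / 2)) * (T - tp)"
proof (rule increment_le_of_derivative_le[OF T])
  fix s assume s: "tp \<le> s" "s \<le> T"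
  have s0: "t0 \<le> s" and sub: "{tp..T} \<subseteq> {t0..}"
    using s tp_ge by auto
  have "((\<lambda>s. exp (2 * \<rho> (s + h)) * discrete_energy h s) has_real_derivative
      exp (2 * \<rho> (s + h)) * (2 * eps (s + h) * discrete_energy h s + discrete_energy_deriv h s))
      (at s within {t0..})"
    using h s0
    by (auto intro!: derivative_eq_intros has_real_derivative_shift[where g = \<rho>] rho_deriv
        discrete_energy_has_deriv simp: algebra_simps)
  then show "((\<lambda>s. exp (2 * \<rho> (s + h)) * discrete_energy h s) has_real_derivative
      exp (2 * \<rho> (s + h)) * (2 * eps (s + h) * discrete_energy h s + discrete_energy_deriv h s))
      (at s within {tp..T})"
    using sub by (rule DERIV_subset)
  have \<delta>_sq: "(fwd_diff h eps s)\<^sup>2 \<le> ((eps tp)\<^sup>2 * h)\<^sup>2"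
    unfolding abs_le_square_iff[symmetric] using fwd_diff_eps_bounds[OF s(1) less_imp_le[OF h(1)]] h
    by (simp add: abs_le_iff)
  have Q_le: "fwd_diff h half_sq_norm_integral s \<le> B\<^sup>2 / 2 * h"
    using bound s0 h by (intro fwd_diff_half_sq_norm_integral_le) auto
  have Q_nonneg: "0 \<le> fwd_diff h half_sq_norm_integral s"
    using s0 h by (intro fwd_diff_half_sq_norm_integral_nonneg) auto
  have "2 * eps (s + h) * discrete_energy h s + discrete_energy_deriv h s
      \<le> (fwd_diff h eps s)\<^sup>2 * fwd_diff h half_sq_norm_integral s"
    using s(1) h(1) by (intro discrete_energy_dissipation) auto
  also have "\<dots> \<le> ((eps tp)\<^sup>2 * h)\<^sup>2 * (B\<^sup>2 / 2 * h)"
    by (rule mult_mono[OF \<delta>_sq Q_le]) (use Q_nonneg in auto)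
  also have "\<dots> = h^3 * ((eps tp)^4 * (B\<^sup>2 / 2))"
    by (simp add: eval_nat_numeral field_simps)
  finally have "exp (2 * \<rho> (s + h)) * (2 * eps (s + h) * discrete_energy h s + discrete_energy_deriv h s)
      \<le> exp (2 * \<rho> (s + h)) * (h^3 * ((eps tp)^4 * (B\<^sup>2 / 2)))"
    by simp
  also have "\<dots> \<le> exp (2 * \<rho> (T + 1)) * (h^3 * ((eps tp)^4 * (B\<^sup>2 / 2)))"
    using rho_mono[of "s + h" "T + 1"] s0 s h by (intro mult_right_mono) auto
  finally show "exp (2 * \<rho> (s + h)) * (2 * eps (s + h) * discrete_energy h s + discrete_energy_deriv h s)
      \<le> h^3 * (exp (2 * \<rho> (T + 1)) * (eps tp)^4 * (B\<^sup>2 / 2))"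
    by (simp add: algebra_simps)
qed

lemma discrete_energy_tendsto:
  assumes "t0 \<le> t"
  shows "((\<lambda>h. exp (2 * \<rho> (t + h)) * discrete_energy h t / h\<^sup>2) \<longlongrightarrow> velocity_energy t) (at_right 0)"
proof -
  have sub: "{t..} \<subseteq> {t0..}"
    using assms by auto
  have "((\<lambda>h. fwd_diff h z t /\<^sub>R h) \<longlongrightarrow> z' t) (at_right 0)"
    by (rule fwd_diff_quotient_tendsto[OF has_vector_derivative_within_subset[OF z_deriv[OF assms] sub]])
  moreover have "((\<lambda>h. fwd_diff h eps t / h) \<longlongrightarrow> eps' t) (at_right 0)"
    by (rule fwd_diff_quotient_tendsto_real[OF DERIV_subset[OF eps_deriv[OF assms] sub]])
  moreover have "((\<lambda>h. fwd_diff h half_sq_norm_integral t / h) \<longlongrightarrow> half_sq_norm t) (at_right 0)"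
    by (rule fwd_diff_quotient_tendsto_real[OF DERIV_subset[OF half_sq_norm_integral_deriv[OF assms] sub]])
  moreover have "((\<lambda>h. \<rho> (t + h)) \<longlongrightarrow> \<rho> t) (at_right 0)"
  proof -
    have "continuous (at_right t) \<rho>"
      using DERIV_continuous[OF DERIV_subset[OF rho_deriv[OF assms] sub]] by (simp add: at_within_Ici_at_right)
    then show ?thesis
      unfolding continuous_within filterlim_at_right_to_0[of _ _ t] by (simp add: add.commute)
  qed
  ultimately have "((\<lambda>h. exp (2 * \<rho> (t + h)) * (norm (fwd_diff h z t /\<^sub>R h)^2 / 2
      + (fwd_diff h eps t / h) * (fwd_diff h half_sq_norm_integral t / h))) \<longlongrightarrow> velocity_energy t) (at_right 0)"
    unfolding velocity_energy_def by (intro tendsto_intros) auto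
  moreover have "\<forall>\<^sub>F h in at_right 0. exp (2 * \<rho> (t + h)) * (norm (fwd_diff h z t /\<^sub>R h)^2 / 2
      + (fwd_diff h eps t / h) * (fwd_diff h half_sq_norm_integral t / h))
      = exp (2 * \<rho> (t + h)) * discrete_energy h t / h\<^sup>2"
  proof (rule eventually_at_rightI[of 0 1])
    fix h :: real assume "h \<in> {0<..<1}"
    then have "norm (fwd_diff h z t /\<^sub>R h)^2 = norm (fwd_diff h z t)^2 / h\<^sup>2"
      by (simp add: power_mult_distrib power_inverse divide_inverse)
    with \<open>h \<in> {0<..<1}\<close> show "exp (2 * \<rho> (t + h)) * (norm (fwd_diff h z t /\<^sub>R h)^2 / 2
        + (fwd_diff h eps t / h) * (fwd_diff h half_sq_norm_integral t / h))
        = exp (2 * \<rho> (t + h)) * discrete_energy h t / h\<^sup>2"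
      by (simp add: discrete_energy_def field_simps power2_eq_square)
  qed simp
  ultimately show ?thesis
    by (rule Lim_transform_eventually)
qed

lemma velocity_energy_antimono:
  assumes "tp \<le> T"
  shows "velocity_energy T \<le> velocity_energy tp"
proof -
  obtain B where bound: "\<And>t. t0 \<le> t \<Longrightarrow> norm (z t) \<le> B"
    using trajectory_bounded by blast
  define K where "K = exp (2 * \<rho> (T + 1)) * (eps tp)^4 * (B\<^sup>2 / 2)"
  have "\<forall>\<^sub>F h in at_right 0. exp (2 * \<rho> (T + h)) * discrete_energy h T / h\<^sup>2
      \<le> exp (2 * \<rho> (tp + h)) * discrete_energy h tp / h\<^sup>2 + h * K * (T - tp)"
  proof (rule eventually_at_rightI[of 0 1])
    fix h :: real assume "h \<in> {0<..<1}"
    then have h: "0 < h" "h \<le> 1"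
      by auto
    have "exp (2 * \<rho> (T + h)) * discrete_energy h T
        \<le> exp (2 * \<rho> (tp + h)) * discrete_energy h tp + h^3 * K * (T - tp)"
      using weighted_discrete_energy_increment[OF bound assms h] unfolding K_def by simp
    then have "exp (2 * \<rho> (T + h)) * discrete_energy h T / h\<^sup>2
        \<le> (exp (2 * \<rho> (tp + h)) * discrete_energy h tp + h^3 * K * (T - tp)) / h\<^sup>2"
      by (rule divide_right_mono) simp
    also have "\<dots> = exp (2 * \<rho> (tp + h)) * discrete_energy h tp / h\<^sup>2 + h * K * (T - tp)"
      using h by (simp add: field_simps power2_eq_square power3_eq_cube)
    finally show "exp (2 * \<rho> (T + h)) * discrete_energy h T / h\<^sup>2
        \<le> exp (2 * \<rho> (tp + h)) * discrete_energy h tp / h\<^sup>2 + h * K * (T - tp)" .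
  qed simp
  moreover have "((\<lambda>h. exp (2 * \<rho> (tp + h)) * discrete_energy h tp / h\<^sup>2 + h * K * (T - tp))
      \<longlongrightarrow> velocity_energy tp + 0 * K * (T - tp)) (at_right 0)"
    by (intro tendsto_intros discrete_energy_tendsto tp_ge)
  ultimately show ?thesis
    using tendsto_le[OF trivial_limit_at_right_real _ discrete_energy_tendsto] assms tp_ge by fastforce
qed

lemma exp_neg_two_rho_le:
  assumes "tp \<le> t"
  shows "exp (- 2 * \<rho> t) \<le> (eps t / (eps tp * exp (\<rho> tp)))^2"
proof -
  have "0 < eps tp" "0 < eps t"
    using assms tp_ge eps_pos by auto
  then have "inverse (exp (\<rho> t)) \<le> eps t / (eps tp * exp (\<rho> tp))"
    using eps_exp_rho_mono[OF order_refl assms] by (simp add: field_simps)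
  then have "inverse (exp (\<rho> t))^2 \<le> (eps t / (eps tp * exp (\<rho> tp)))^2"
    by (intro power_mono) auto
  then show ?thesis
    by (simp add: exp_minus[symmetric] exp_double[symmetric])
qed

lemma velocity_sq_le:
  obtains K where "0 \<le> K" "\<And>t. tp \<le> t \<Longrightarrow> norm (z' t)^2 \<le> K * (eps t)^2"
proof -
  obtain B where bound: "\<And>t. t0 \<le> t \<Longrightarrow> norm (z t) \<le> B"
    using trajectory_bounded by blast
  define M where "M = max 0 (velocity_energy tp) / (eps tp * exp (\<rho> tp))^2"
  have "norm (z' t)^2 \<le> (2 * M + B\<^sup>2) * (eps t)^2" if t: "tp \<le> t" for t
  proof -
    have "norm (z' t)^2 / 2 + eps' t * half_sq_norm t = exp (- 2 * \<rho> t) * velocity_energy t"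
      by (simp add: velocity_energy_def mult.assoc[symmetric] exp_add[symmetric])
    also have "\<dots> \<le> exp (- 2 * \<rho> t) * max 0 (velocity_energy tp)"
      using velocity_energy_antimono[OF t] by (intro mult_left_mono) auto
    also have "\<dots> \<le> (eps t / (eps tp * exp (\<rho> tp)))^2 * max 0 (velocity_energy tp)"
      using exp_neg_two_rho_le[OF t] by (rule mult_right_mono) simp
    also have "\<dots> = M * (eps t)^2"
      by (simp add: M_def power_divide)
    finally have "norm (z' t)^2 / 2 \<le> M * (eps t)^2 - eps' t * half_sq_norm t"
      by linarith
    moreover have "- eps' t * half_sq_norm t \<le> (eps t)^2 * (B\<^sup>2 / 2)"
    proof -
      have "- eps' t * half_sq_norm t \<le> (eps t)^2 * half_sq_norm t"
        using eps_sq_plus_deriv_nonneg[OF t] by (intro mult_right_mono) (auto simp: half_sq_norm_def)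
      also have "\<dots> \<le> (eps t)^2 * (B\<^sup>2 / 2)"
        using bound[of t] t tp_ge by (intro mult_left_mono) (auto simp: half_sq_norm_def intro: power_mono)
      finally show ?thesis .
    qed
    ultimately show ?thesis
      by (simp add: algebra_simps)
  qed
  moreover have "0 \<le> 2 * M + B\<^sup>2"
    by (simp add: M_def)
  ultimately show ?thesis
    using that by blast
qed

lemma weighted_velocity_integral_le:
  assumes K: "0 \<le> K" "\<And>t. tp \<le> t \<Longrightarrow> norm (z' t)^2 \<le> K * (eps t)^2" and t: "tp \<le> t"
  shows "exp (- \<rho> t) * integral {tp..t} (\<lambda>\<tau>. exp (\<rho> \<tau>) * (1 / eps \<tau>) * (norm (z' \<tau>))\<^sup>2) \<le> K"
proof -
  have sub: "{tp..t} \<subseteq> {t0..}"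
    using tp_ge by auto
  have \<rho>_deriv': "(\<rho> has_real_derivative eps \<tau>) (at \<tau> within {tp..t})" if "\<tau> \<in> {tp..t}" for \<tau>
    using that tp_ge by (intro DERIV_subset[OF rho_deriv sub]) auto
  have K_exp: "((\<lambda>\<tau>. K * (exp (\<rho> \<tau>) * eps \<tau>)) has_integral K * exp (\<rho> t) - K * exp (\<rho> tp)) {tp..t}"
  proof (rule fundamental_theorem_of_calculus[OF t])
    fix \<tau> assume "\<tau> \<in> {tp..t}"
    then show "((\<lambda>\<tau>. K * exp (\<rho> \<tau>)) has_vector_derivative K * (exp (\<rho> \<tau>) * eps \<tau>)) (at \<tau> within {tp..t})"
      unfolding has_real_derivative_iff_has_vector_derivative[symmetric]
      by (intro DERIV_cmult DERIV_chain2[OF DERIV_exp] \<rho>_deriv')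
  qed
  have "integral {tp..t} (\<lambda>\<tau>. exp (\<rho> \<tau>) * (1 / eps \<tau>) * (norm (z' \<tau>))\<^sup>2)
      \<le> integral {tp..t} (\<lambda>\<tau>. K * (exp (\<rho> \<tau>) * eps \<tau>))"
  proof (rule integral_le)
    have "continuous_on {tp..t} \<rho>"
      unfolding continuous_on_eq_continuous_within using DERIV_continuous[OF \<rho>_deriv'] by blast
    moreover have "\<forall>\<tau>\<in>{tp..t}. eps \<tau> \<noteq> 0"
      using eps_pos tp_ge by (metis atLeastAtMost_iff less_irrefl order_trans)
    ultimately show "(\<lambda>\<tau>. exp (\<rho> \<tau>) * (1 / eps \<tau>) * (norm (z' \<tau>))\<^sup>2) integrable_on {tp..t}"
      by (intro integrable_continuous_interval continuous_intros continuous_on_subset[OF eps_cont sub]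
          continuous_on_subset[OF z'_cont sub])
    show "(\<lambda>\<tau>. K * (exp (\<rho> \<tau>) * eps \<tau>)) integrable_on {tp..t}"
      using K_exp by blast
    fix \<tau> assume "\<tau> \<in> {tp..t}"
    then have \<tau>: "tp \<le> \<tau>" "0 < eps \<tau>"
      using eps_pos tp_ge by auto
    have "exp (\<rho> \<tau>) * (1 / eps \<tau>) * (norm (z' \<tau>))\<^sup>2 \<le> exp (\<rho> \<tau>) * (1 / eps \<tau>) * (K * (eps \<tau>)\<^sup>2)"
      using K(2)[OF \<tau>(1)] \<tau>(2) by (intro mult_left_mono) auto
    then show "exp (\<rho> \<tau>) * (1 / eps \<tau>) * (norm (z' \<tau>))\<^sup>2 \<le> K * (exp (\<rho> \<tau>) * eps \<tau>)"
      using \<tau>(2) by (simp add: power2_eq_square field_simps)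
  qed
  also have "\<dots> = K * exp (\<rho> t) - K * exp (\<rho> tp)"
    using K_exp by (rule integral_unique)
  also have "\<dots> \<le> K * exp (\<rho> t)"
    using K(1) by simp
  finally show ?thesis
    by (simp add: exp_minus field_simps)
qed

lemma weighted_velocity_integral_Limsup_finite:
  "Limsup at_top (\<lambda>t. ereal (exp (- \<rho> t) *
      integral {tp..t} (\<lambda>\<tau>. exp (\<rho> \<tau>) * (1 / eps \<tau>) * (norm (z' \<tau>))\<^sup>2))) < \<infinity>"
proof -
  obtain K where K: "0 \<le> K" "\<And>t. tp \<le> t \<Longrightarrow> norm (z' t)^2 \<le> K * (eps t)^2"
    using velocity_sq_le by blast
  have "Limsup at_top (\<lambda>t. ereal (exp (- \<rho> t) *
      integral {tp..t} (\<lambda>\<tau>. exp (\<rho> \<tau>) * (1 / eps \<tau>) * (norm (z' \<tau>))\<^sup>2))) \<le> ereal K"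
    using weighted_velocity_integral_le[OF K]
    by (intro Limsup_bounded eventually_at_top_linorderI[of tp]) auto
  then show ?thesis
    by (auto simp: order.strict_trans1)
qed

end

theorem proposition4p3:
  fixes f :: "'a::{real_inner,complete_space} \<Rightarrow> real"
    and gf :: "'a \<Rightarrow> 'a"
    and A :: "'a \<Rightarrow> 'b::{real_inner,complete_space}"
    and Astar :: "'b \<Rightarrow> 'a"
    and b :: 'b
    and eps eps' eps'' :: "real \<Rightarrow> real"
    and t0 tp :: real
    and x x' :: "real \<Rightarrow> 'a"
    and lam lam' :: "real \<Rightarrow> 'b"
  assumes f_convex: "convex_on UNIV f"
    and f_grad: "\<And>u. (f has_derivative (\<lambda>h. inner (gf u) h)) (at u)"
    and gf_cont: "continuous_on UNIV gf"
    and gf_lip: "\<And>B. bounded B \<Longrightarrow> \<exists>K. \<forall>u\<in>B. \<forall>v\<in>B. norm (gf u - gf v) \<le> K * norm (u - v)"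
    and A_lin: "bounded_linear A"
    and A_adj: "\<And>u v. inner (A u) v = inner u (Astar v)"
    and t0_nonneg: "t0 \<ge> 0"
    and eps_pos: "\<And>t. t \<ge> t0 \<Longrightarrow> eps t > 0"
    and eps_d1: "\<And>t. t \<ge> t0 \<Longrightarrow> (eps has_real_derivative eps' t) (at t within {t0..})"
    and eps_d2: "\<And>t. t \<ge> t0 \<Longrightarrow> (eps' has_real_derivative eps'' t) (at t within {t0..})"
    and eps_C2: "continuous_on {t0..} eps''"
    and eps_lim: "(eps \<longlongrightarrow> 0) at_top"
    and SM_ne: "opt_set f A b \<times> mult_set f gf A Astar b \<noteq> {}"
    and x_deriv: "\<And>t. t \<ge> t0 \<Longrightarrow> (x has_vector_derivative x' t) (at t within {t0..})"
    and lam_deriv: "\<And>t. t \<ge> t0 \<Longrightarrow> (lam has_vector_derivative lam' t) (at t within {t0..})"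
    and x'_cont: "continuous_on {t0..} x'"
    and lam'_cont: "continuous_on {t0..} lam'"
    and eq_x: "\<And>t. t \<ge> t0 \<Longrightarrow> x' t + gf (x t) + Astar (lam t) + eps t *\<^sub>R x t = 0"
    and eq_lam: "\<And>t. t \<ge> t0 \<Longrightarrow> lam' t + b - A (x t) + eps t *\<^sub>R lam t = 0"
    and eps_decr: "\<And>s t. t0 \<le> s \<Longrightarrow> s \<le> t \<Longrightarrow> eps t \<le> eps s"
    and tp_ge: "tp \<ge> t0"
    and cond1: "\<And>t. t \<ge> tp \<Longrightarrow> (eps t)\<^sup>2 + eps' t \<ge> 0"
    and cond2: "\<And>t. t \<ge> tp \<Longrightarrow> 2 * eps t * eps' t + eps'' t \<le> 0"
  shows "Limsup at_top (\<lambda>t::real. ereal (exp (- rho eps t0 t) *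
            integral {tp..t} (\<lambda>\<tau>. exp (rho eps t0 \<tau>) * (1 / eps \<tau>) * (norm (x' \<tau>, lam' \<tau>))\<^sup>2)))
         < \<infinity>"
proof -
  interpret tikhonov_monotone_flow_C2 "saddle_operator gf A Astar b" eps t0
    "\<lambda>t. (x t, lam t)" "\<lambda>t. (x' t, lam' t)" eps' eps'' tp
  proof
    show "0 \<le> inner (saddle_operator gf A Astar b u - saddle_operator gf A Astar b v) (u - v)" for u v
      using convex_on_gradient_monotone[OF f_convex f_grad] A_adj by (rule saddle_operator_monotone)
    show "\<exists>w. saddle_operator gf A Astar b w = 0"
      using SM_ne by (rule saddle_operator_zero)
    show "continuous_on {t0..} eps"
      unfolding continuous_on_eq_continuous_within using DERIV_continuous[OF eps_d1] by auto
    show "((\<lambda>t. (x t, lam t)) has_vector_derivative (x' t, lam' t)) (at t within {t0..})" if "t0 \<le> t" for t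
      using that by (intro has_vector_derivative_Pair x_deriv lam_deriv)
    show "(x' t, lam' t) = - saddle_operator gf A Astar b (x t, lam t) - eps t *\<^sub>R (x t, lam t)"
      if "t0 \<le> t" for t
      using eq_x[OF that] eq_lam[OF that] by (rule saddle_operator_flow_eq)
    show "continuous_on {t0..} (\<lambda>t. (x' t, lam' t))"
      by (intro continuous_on_Pair x'_cont lam'_cont)
  qed (use eps_pos eps_d1 eps_d2 eps_decr tp_ge cond1 cond2 in auto)
  show ?thesis
    using weighted_velocity_integral_Limsup_finite by simp
qed

end
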